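(* Assume the setting described in the context. Then $(L-1)\mathfrak m=0$ if and only if for all $\theta,\vartheta\in\mathbb R^{\mathfrak d}$ and $\lambda\in[0,1]$ it holds that $\mathcal L_\infty(\lambda\theta+(1-\lambda)\vartheta)\le\lambda\mathcal L_\infty(\theta)+(1-\lambda)\mathcal L_\infty(\vartheta)$.
   Context: Setting. Let $L,\mathfrak d\in\mathbb N=\{1,2,\dots\}$, $(\ell_k)_{k\in\mathbb N_0}\subseteq\mathbb N$, $a\in\mathbb R$, $b\in(a,\infty)$ with $\mathfrak d=\sum_{k=1}^L\ell_k(\ell_{k-1}+1)$; let $\mathbf d_k=\sum_{h=1}^k\ell_h(\ell_{h-1}+1)$ for $k\in\mathbb N_0$. For $\theta=(\theta_1,\dots,\theta_{\mathfrak d})\in\mathbb R^{\mathfrak d}$, $k\in\{1,\dots,L\}$, $i\in\{1,\dots,\ell_k\}$, $j\in\{1,\dots,\ell_{k-1}\}$ let $\mathfrak w^{k,\theta}_{i,j}=\theta_{(i-1)\ell_{k-1}+j+\mathbf d_{k-1}}$ and $\mathfrak b^{k,\theta}_i=\theta_{\ell_k\ell_{k-1}+i+\mathbf d_{k-1}}$, let $\mathfrak w^{k,\theta}=(\mathfrak w^{k,\theta}_{i,j})_{i,j}\in\mathbb R^{\ell_k\times\ell_{k-1}}$, $\mathfrak b^{k,\theta}=(\mathfrak b^{k,\theta}_1,\dots,\mathfrak b^{k,\theta}_{\ell_k})\in\mathbb R^{\ell_k}$, and $\mathcal A^\theta_k(x)=\mathfrak b^{k,\theta}+\mathfrak w^{k,\theta}x$.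 Let $\mathfrak M_\infty(x_1,\dots,x_n)=(\max\{x_1,0\},\dots,\max\{x_n,0\})$ and $\|\cdot\|$ the Euclidean norm. Define $\mathcal N^{k,\theta}_\infty\colon\mathbb R^{\ell_0}\to\mathbb R^{\ell_k}$, $k\in\{1,\dots,L\}$, by $\mathcal N^{1,\theta}_\infty=\mathcal A^\theta_1$ and $\mathcal N^{k+1,\theta}_\infty(x)=\mathcal A^\theta_{k+1}(\mathfrak M_\infty(\mathcal N^{k,\theta}_\infty(x)))$. Let $\mu$ be a measure on the Borel $\sigma$-algebra of $[a,b]^{\ell_0}$ with $\mathfrak m=\mu([a,b]^{\ell_0})\in\mathbb R$, let $f\colon[a,b]^{\ell_0}\to\mathbb R^{\ell_L}$ be measurable, and let $\mathcal L_\infty\colon\mathbb R^{\mathfrak d}\to\mathbb R$, $\mathcal L_\infty(\theta)=\int_{[a,b]^{\ell_0}}\|\mathcal N^{L,\theta}_\infty(x)-f(x)\|^2\,\mu(dx)$ (these integrals are real numbers as part of the setting). *)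

theory Defs
  imports "HOL-Analysis.Analysis" "HOL-Probability.Probability"
begin

text \<open>Vectors in R^n are represented as functions nat => real, using the
  coordinates 1..n; parameter vectors theta in R^d likewise (coordinates 1..d).\<close>

definition dsum :: "(nat \<Rightarrow> nat) \<Rightarrow> nat \<Rightarrow> nat" where
  "dsum l k = (\<Sum>h\<in>{1..k}. l h * (l (h - 1) + 1))"

definition weight :: "(nat \<Rightarrow> nat) \<Rightarrow> nat \<Rightarrow> (nat \<Rightarrow> real) \<Rightarrow> nat \<Rightarrow> nat \<Rightarrow> real" where
  "weight l k \<theta> i j = \<theta> ((i - 1) * l (k - 1) + j + dsum l (k - 1))"

definition bias :: "(nat \<Rightarrow> nat) \<Rightarrow> nat \<Rightarrow> (nat \<Rightarrow> real) \<Rightarrow> nat \<Rightarrow> real" where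
  "bias l k \<theta> i = \<theta> (l k * l (k - 1) + i + dsum l (k - 1))"

definition affine :: "(nat \<Rightarrow> nat) \<Rightarrow> nat \<Rightarrow> (nat \<Rightarrow> real) \<Rightarrow> (nat \<Rightarrow> real) \<Rightarrow> (nat \<Rightarrow> real)" where
  "affine l k \<theta> y = (\<lambda>i. bias l k \<theta> i + (\<Sum>j\<in>{1..l (k - 1)}. weight l k \<theta> i j * y j))"

definition relu :: "(nat \<Rightarrow> real) \<Rightarrow> (nat \<Rightarrow> real)" where
  "relu y = (\<lambda>i. max (y i) 0)"

text \<open>realization N^{k,theta}; the case k = 0 is a dummy (only k >= 1 is used).\<close>
primrec realization :: "(nat \<Rightarrow> nat) \<Rightarrow> nat \<Rightarrow> (nat \<Rightarrow> real) \<Rightarrow> (nat \<Rightarrow> real) \<Rightarrow> (nat \<Rightarrow> real)" where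
  "realization l 0 \<theta> x = x"
| "realization l (Suc k) \<theta> x =
     affine l (Suc k) \<theta> (if k = 0 then x else relu (realization l k \<theta> x))"

definition risk :: "(nat \<Rightarrow> nat) \<Rightarrow> nat \<Rightarrow> (nat \<Rightarrow> real) measure \<Rightarrow> ((nat \<Rightarrow> real) \<Rightarrow> (nat \<Rightarrow> real))
     \<Rightarrow> (nat \<Rightarrow> real) \<Rightarrow> real" where
  "risk l L \<mu> f \<theta> =
     (\<integral>x. (\<Sum>i\<in>{1..l L}. (realization l L \<theta> x i - f x i)\<^sup>2) \<partial>\<mu>)"

end

theory Submission
  imports Defs
begin

(* For L = 1 the realization is affine in the parameter, so the risk is an integral of convex
   quadratics of the parameter; if the measure vanishes, so does the risk. Conversely, let L >= 2
   and mu(space) > 0. Give neuron 1 of the last hidden layer the bias s and let it feed output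
   neuron 1 with weight s, that neuron having bias beta, all other parameters being 0. The network
   is then the constant beta + s * max s 0 in output coordinate 1. The parameters for s = 1 and
   s = -1 produce the outputs beta + 1 and beta, and their midpoint, the parameter for s = 0,
   produces beta. Convexity would thus make c |-> integral of (c - f_1)^2 nondecreasing, which is
   absurd for a quadratic with leading coefficient mu(space) > 0. *)

lemma affine_param_linear:
  "affine l k (\<lambda>p. a * \<theta> p + c * \<phi> p) y i = a * affine l k \<theta> y i + c * affine l k \<phi> y i"
  by (simp add: affine_def bias_def weight_def algebra_simps sum.distrib sum_distrib_left)

lemma realization_eq_bias_if_weights_vanish:
  assumes "k \<ge> 1" "\<And>j. j \<in> {1..l (k - 1)} \<Longrightarrow> weight l k \<theta> i j = 0"
  shows "realization l k \<theta> x i = bias l k \<theta> i"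
  using assms by (cases k) (simp_all add: affine_def)

lemma sum_squares_convex_comb_le:
  fixes u v c :: "'a \<Rightarrow> real"
  assumes "0 \<le> t" "t \<le> 1"
  shows "(\<Sum>i\<in>A. (t * u i + (1 - t) * v i - c i)\<^sup>2)
    \<le> t * (\<Sum>i\<in>A. (u i - c i)\<^sup>2) + (1 - t) * (\<Sum>i\<in>A. (v i - c i)\<^sup>2)"
proof -
  have "(t * u i + (1 - t) * v i - c i)\<^sup>2 \<le> t * (u i - c i)\<^sup>2 + (1 - t) * (v i - c i)\<^sup>2" for i
    using convex_onD[OF convex_power2, of "1 - t" "u i - c i" "v i - c i"] assms
    by (simp add: algebra_simps)
  then show ?thesis
    by (simp add: sum_distrib_left sum.distrib[symmetric] sum_mono)
qed

lemma risk_convex_comb_le_depth_one: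
  assumes "\<And>\<theta>. integrable \<mu> (\<lambda>x. \<Sum>i\<in>{1..l 1}. (realization l 1 \<theta> x i - f x i)\<^sup>2)"
    and "0 \<le> t" "t \<le> 1"
  shows "risk l 1 \<mu> f (\<lambda>p. t * \<theta> p + (1 - t) * \<phi> p)
    \<le> t * risk l 1 \<mu> f \<theta> + (1 - t) * risk l 1 \<mu> f \<phi>"
proof -
  have "realization l 1 (\<lambda>p. t * \<theta> p + (1 - t) * \<phi> p) x i
      = t * realization l 1 \<theta> x i + (1 - t) * realization l 1 \<phi> x i" for x i
    by (simp add: affine_param_linear)
  then have "risk l 1 \<mu> f (\<lambda>p. t * \<theta> p + (1 - t) * \<phi> p)
      \<le> (\<integral>x. t * (\<Sum>i\<in>{1..l 1}. (realization l 1 \<theta> x i - f x i)\<^sup>2)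
            + (1 - t) * (\<Sum>i\<in>{1..l 1}. (realization l 1 \<phi> x i - f x i)\<^sup>2) \<partial>\<mu>)"
    unfolding risk_def using assms
    by (intro integral_mono assms(1)) (auto simp: sum_squares_convex_comb_le)
  also have "\<dots> = t * risk l 1 \<mu> f \<theta> + (1 - t) * risk l 1 \<mu> f \<phi>"
    unfolding risk_def using assms(1) by simp
  finally show ?thesis .
qed

lemma risk_eq_0_if_null:
  assumes "finite_measure \<mu>" "measure \<mu> (space \<mu>) = 0"
  shows "risk l L \<mu> f \<theta> = 0"
proof -
  have "emeasure \<mu> (space \<mu>) = 0"
    using assms by (simp add: finite_measure.emeasure_eq_measure)
  then have "AE x in \<mu>. P x" for P
    by (intro AE_I[of _ _ "space \<mu>"]) auto
  then show ?thesis
    unfolding risk_def by (intro integral_eq_zero_AE)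
qed

lemma (in finite_measure) integral_shifted_square_decreases:
  fixes h R :: "'a \<Rightarrow> real"
  assumes "measure M (space M) > 0" "\<And>c. integrable M (\<lambda>x. (c - h x)\<^sup>2 + R x)"
  shows "\<exists>c. (\<integral>x. (c + 1 - h x)\<^sup>2 + R x \<partial>M) < (\<integral>x. (c - h x)\<^sup>2 + R x \<partial>M)"
proof -
  define m where "m = measure M (space M)"
  define D where "D x = ((0 - h x)\<^sup>2 + R x) - ((1 - h x)\<^sup>2 + R x)" for x
  have "integrable M D"
    unfolding D_def by (intro Bochner_Integration.integrable_diff assms(2))
  define c where "c = ((\<integral>x. D x \<partial>M) - m) / (2 * m)"
  have "(\<integral>x. (c - h x)\<^sup>2 + R x \<partial>M) - (\<integral>x. (c + 1 - h x)\<^sup>2 + R x \<partial>M)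
      = (\<integral>x. ((c - h x)\<^sup>2 + R x) - ((c + 1 - h x)\<^sup>2 + R x) \<partial>M)"
    by (rule Bochner_Integration.integral_diff[OF assms(2) assms(2), symmetric])
  also have "\<dots> = (\<integral>x. D x - 2 * c \<partial>M)"
    by (intro Bochner_Integration.integral_cong)
      (simp_all add: D_def power2_eq_square algebra_simps)
  also have "\<dots> = (\<integral>x. D x \<partial>M) - 2 * c * m"
    using \<open>integrable M D\<close> by (simp add: m_def)
  also have "\<dots> = m"
    using assms(1) by (simp add: c_def m_def field_simps)
  finally show ?thesis
    using assms(1) m_def by (intro exI[of _ c]) linarith
qed

definition weight_index :: "(nat \<Rightarrow> nat) \<Rightarrow> nat \<Rightarrow> nat \<Rightarrow> nat \<Rightarrow> nat" where
  "weight_index l k i j = (i - 1) * l (k - 1) + j + dsum l (k - 1)"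

definition bias_index :: "(nat \<Rightarrow> nat) \<Rightarrow> nat \<Rightarrow> nat \<Rightarrow> nat" where
  "bias_index l k i = l k * l (k - 1) + i + dsum l (k - 1)"

lemma weight_eq_param: "weight l k \<theta> i j = \<theta> (weight_index l k i j)"
  by (simp add: weight_def weight_index_def)

lemma bias_eq_param: "bias l k \<theta> i = \<theta> (bias_index l k i)"
  by (simp add: bias_def bias_index_def)

lemma bias_index_inj: "bias_index l k i = bias_index l k i' \<longleftrightarrow> i = i'"
  by (simp add: bias_index_def)

lemma weight_index_bounds:
  assumes "i \<in> {1..l k}" "j \<in> {1..l (k - 1)}"
  shows "dsum l (k - 1) < weight_index l k i j"
    and "weight_index l k i j \<le> dsum l (k - 1) + l k * l (k - 1)"
proof -
  have "(i - 1) * l (k - 1) + j \<le> (l k - 1) * l (k - 1) + l (k - 1)"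
    using assms by (intro add_mono mult_le_mono1) auto
  also have "\<dots> = l k * l (k - 1)"
    using assms by (cases "l k") auto
  finally show "weight_index l k i j \<le> dsum l (k - 1) + l k * l (k - 1)"
    by (simp add: weight_index_def)
  show "dsum l (k - 1) < weight_index l k i j"
    using assms by (simp add: weight_index_def)
qed

lemma bias_index_bounds:
  assumes "k \<ge> 1" "i \<in> {1..l k}"
  shows "dsum l (k - 1) + l k * l (k - 1) < bias_index l k i"
    and "bias_index l k i \<le> dsum l k"
proof -
  have "dsum l k = dsum l (k - 1) + l k * (l (k - 1) + 1)"
    using assms(1) by (cases k) (simp_all add: dsum_def)
  then show "bias_index l k i \<le> dsum l k"
    using assms(2) by (simp add: bias_index_def algebra_simps)
  show "dsum l (k - 1) + l k * l (k - 1) < bias_index l k i"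
    using assms(2) by (simp add: bias_index_def)
qed

definition const_net_param :: "(nat \<Rightarrow> nat) \<Rightarrow> nat \<Rightarrow> real \<Rightarrow> real \<Rightarrow> nat \<Rightarrow> real" where
  "const_net_param l K s \<beta> p =
     (if p = bias_index l K 1 \<or> p = weight_index l (Suc K) 1 1 then s
      else if p = bias_index l (Suc K) 1 then \<beta> else 0)"

context
  fixes l :: "nat \<Rightarrow> nat" and K :: nat
  assumes K: "K \<ge> 1" and l_pos: "\<And>k. l k \<ge> 1"
begin

lemma const_net_param_indices_ordered:
  "bias_index l K 1 \<le> dsum l K"
  "dsum l K < weight_index l (Suc K) 1 1"
  "weight_index l (Suc K) 1 1 \<le> dsum l K + l (Suc K) * l K"
  "dsum l K + l (Suc K) * l K < bias_index l (Suc K) 1"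
  using bias_index_bounds[OF K, of 1 l] bias_index_bounds[of "Suc K" 1 l]
    weight_index_bounds[of 1 l "Suc K" 1] l_pos[of K] l_pos[of "Suc K"] by auto

lemma weight_const_net_param_hidden:
  assumes "i \<in> {1..l K}" "j \<in> {1..l (K - 1)}"
  shows "weight l K (const_net_param l K s \<beta>) i j = 0"
proof -
  have "weight_index l K i j < bias_index l K 1"
    using weight_index_bounds(2)[OF assms] bias_index_bounds(1)[OF K, of 1 l] l_pos[of K]
    by simp
  with const_net_param_indices_ordered have "weight_index l K i j \<noteq> bias_index l K 1"
    "weight_index l K i j \<noteq> weight_index l (Suc K) 1 1"
    "weight_index l K i j \<noteq> bias_index l (Suc K) 1"
    by auto
  then show ?thesis
    by (simp add: weight_eq_param const_net_param_def)
qed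

lemma bias_const_net_param_hidden:
  assumes "i \<in> {1..l K}"
  shows "bias l K (const_net_param l K s \<beta>) i = (if i = 1 then s else 0)"
proof -
  from bias_index_bounds(2)[where l = l, OF K assms] const_net_param_indices_ordered
  have "bias_index l K i \<noteq> weight_index l (Suc K) 1 1"
    "bias_index l K i \<noteq> bias_index l (Suc K) 1"
    by auto
  then show ?thesis
    by (simp add: bias_eq_param const_net_param_def bias_index_inj)
qed

lemma weight_const_net_param_output:
  assumes "i \<in> {1..l (Suc K)}" "j \<in> {1..l K}"
  shows "weight l (Suc K) (const_net_param l K s \<beta>) i j = (if i = 1 \<and> j = 1 then s else 0)"
proof -
  have "weight_index l (Suc K) i j = weight_index l (Suc K) 1 1 \<longleftrightarrow> i = 1 \<and> j = 1"
  proof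
    assume "weight_index l (Suc K) i j = weight_index l (Suc K) 1 1"
    then have "(i - 1) * l K + j = 1"
      by (simp add: weight_index_def)
    moreover have "i \<ge> 1" "j \<ge> 1" "l K \<ge> 1"
      using assms l_pos by auto
    ultimately have "(i - 1) * l K = 0" "j = 1" "l K \<noteq> 0" "i \<ge> 1"
      by linarith+
    then show "i = 1 \<and> j = 1"
      by simp
  qed simp
  moreover
  from weight_index_bounds[where l = l and k = "Suc K", unfolded diff_Suc_1, OF assms]
    const_net_param_indices_ordered
  have "weight_index l (Suc K) i j \<noteq> bias_index l K 1"
    "weight_index l (Suc K) i j \<noteq> bias_index l (Suc K) 1"
    by auto
  ultimately show ?thesis
    by (simp add: weight_eq_param const_net_param_def)
qed

lemma bias_const_net_param_output:
  assumes "i \<in> {1..l (Suc K)}"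
  shows "bias l (Suc K) (const_net_param l K s \<beta>) i = (if i = 1 then \<beta> else 0)"
proof -
  from bias_index_bounds(1)[of "Suc K" i l] assms const_net_param_indices_ordered
  have "bias_index l (Suc K) i \<noteq> bias_index l K 1"
    "bias_index l (Suc K) i \<noteq> weight_index l (Suc K) 1 1"
    by auto
  then show ?thesis
    by (simp add: bias_eq_param const_net_param_def bias_index_inj)
qed

lemma realization_const_net_param_hidden:
  assumes "i \<in> {1..l K}"
  shows "realization l K (const_net_param l K s \<beta>) x i = (if i = 1 then s else 0)"
proof -
  have "realization l K (const_net_param l K s \<beta>) x i = bias l K (const_net_param l K s \<beta>) i"
    using assms by (intro realization_eq_bias_if_weights_vanish[OF K] weight_const_net_param_hidden)
  then show ?thesis
    using assms by (simp add: bias_const_net_param_hidden)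
qed

lemma realization_const_net_param_output:
  assumes "i \<in> {1..l (Suc K)}"
  shows "realization l (Suc K) (const_net_param l K s \<beta>) x i
    = (if i = 1 then \<beta> + s * max s 0 else 0)"
proof -
  let ?\<theta> = "const_net_param l K s \<beta>"
  have "realization l (Suc K) ?\<theta> x i
      = bias l (Suc K) ?\<theta> i
        + (\<Sum>j\<in>{1..l K}. weight l (Suc K) ?\<theta> i j * relu (realization l K ?\<theta> x) j)"
    using K by (simp add: affine_def)
  also have "(\<Sum>j\<in>{1..l K}. weight l (Suc K) ?\<theta> i j * relu (realization l K ?\<theta> x) j)
      = (\<Sum>j\<in>{1..l K}. if j = 1 then (if i = 1 then s * max s 0 else 0) else 0)"
    using assms by (intro sum.cong) (auto simp: weight_const_net_param_output relu_def
        realization_const_net_param_hidden)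
  also have "\<dots> = (if i = 1 then s * max s 0 else 0)"
    using l_pos[of K] by simp
  finally show ?thesis
    using assms by (simp add: bias_const_net_param_output)
qed

lemma sq_error_const_net_param:
  "(\<Sum>i\<in>{1..l (Suc K)}. (realization l (Suc K) (const_net_param l K s \<beta>) x i - f x i)\<^sup>2)
    = (\<beta> + s * max s 0 - f x 1)\<^sup>2 + (\<Sum>i\<in>{2..l (Suc K)}. (f x i)\<^sup>2)"
  using l_pos[of "Suc K"]
  by (simp add: sum.atLeast_Suc_atMost realization_const_net_param_output numeral_2_eq_2
      del: realization.simps)

lemma risk_not_convex:
  assumes "finite_measure \<mu>" "measure \<mu> (space \<mu>) > 0"
    and "\<And>\<theta>. integrable \<mu>
      (\<lambda>x. \<Sum>i\<in>{1..l (Suc K)}. (realization l (Suc K) \<theta> x i - f x i)\<^sup>2)"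
  shows "\<exists>\<theta> \<phi>. \<exists>t\<in>{0..1::real}.
    t * risk l (Suc K) \<mu> f \<theta> + (1 - t) * risk l (Suc K) \<mu> f \<phi>
      < risk l (Suc K) \<mu> f (\<lambda>p. t * \<theta> p + (1 - t) * \<phi> p)"
proof -
  define R where "R x = (\<Sum>i\<in>{2..l (Suc K)}. (f x i)\<^sup>2)" for x
  have risk_eq: "risk l (Suc K) \<mu> f (const_net_param l K s \<beta>)
      = (\<integral>x. (\<beta> + s * max s 0 - f x 1)\<^sup>2 + R x \<partial>\<mu>)" for s \<beta>
    unfolding risk_def sq_error_const_net_param R_def ..
  have "integrable \<mu> (\<lambda>x. (c - f x 1)\<^sup>2 + R x)" for c
    using assms(3)[of "const_net_param l K 0 c"]
    unfolding sq_error_const_net_param R_def by simp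
  then obtain c
    where c: "(\<integral>x. (c + 1 - f x 1)\<^sup>2 + R x \<partial>\<mu>) < (\<integral>x. (c - f x 1)\<^sup>2 + R x \<partial>\<mu>)"
    using finite_measure.integral_shifted_square_decreases[OF assms(1,2), where h = "\<lambda>x. f x 1"]
    by blast
  have "(\<lambda>p. 1/2 * const_net_param l K 1 c p + (1 - 1/2) * const_net_param l K (-1) c p)
      = const_net_param l K 0 c"
    by (auto simp: const_net_param_def)
  with c show ?thesis
    by (intro exI[of _ "const_net_param l K 1 c"] exI[of _ "const_net_param l K (-1) c"]
        bexI[of _ "1/2"]) (simp_all add: risk_eq add.commute)
qed

end

theorem corollary2p19:
  fixes L :: nat and l :: "nat \<Rightarrow> nat" and a b :: real
    and \<mu> :: "(nat \<Rightarrow> real) measure" and f :: "(nat \<Rightarrow> real) \<Rightarrow> (nat \<Rightarrow> real)"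
  assumes "L \<ge> 1"
    and "\<And>k. l k \<ge> 1"
    and "a < b"
    and "sets \<mu> = sets (Pi\<^sub>M {1..l 0} (\<lambda>_. restrict_space borel {a..b}))"
    and "emeasure \<mu> (space \<mu>) < \<infinity>"
    and "\<And>i. i \<in> {1..l L} \<Longrightarrow> (\<lambda>x. f x i) \<in> borel_measurable \<mu>"
    and "\<And>\<theta>. integrable \<mu> (\<lambda>x. \<Sum>i\<in>{1..l L}. (realization l L \<theta> x i - f x i)\<^sup>2)"
  shows "(real L - 1) * measure \<mu> (space \<mu>) = 0 \<longleftrightarrow>
    (\<forall>\<theta> \<phi> :: nat \<Rightarrow> real. \<forall>t\<in>{0..1::real}.
       risk l L \<mu> f (\<lambda>i. t * \<theta> i + (1 - t) * \<phi> i)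
         \<le> t * risk l L \<mu> f \<theta> + (1 - t) * risk l L \<mu> f \<phi>)"
proof -
  have fin: "finite_measure \<mu>"
    using assms(5) by (intro finite_measureI) (simp add: less_top)
  consider (shallow) "L = 1" | (null) "measure \<mu> (space \<mu>) = 0"
    | (deep) K where "L = Suc K" "K \<ge> 1" "measure \<mu> (space \<mu>) > 0"
    using assms(1) measure_nonneg[of \<mu> "space \<mu>"] by (cases L) fastforce+
  then show ?thesis
  proof cases
    case shallow
    then show ?thesis
      using risk_convex_comb_le_depth_one[of \<mu> l f] assms(7) by auto
  next
    case null
    then show ?thesis
      using risk_eq_0_if_null[OF fin] by simp
  next
    case deep
    then show ?thesis
      using risk_not_convex[OF deep(2) assms(2) fin deep(3)] assms(7) by (force simp: not_le)
  qed
qed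

end
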